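(* Let $z^*=(L^*,\xi^* )$ be a global minimizer of problem (P). Let there be a constant $c>0$ and a direction $u\in\mathbb R^2$ with $\|u\|=1$ such that $u^T\xi^*_\tau(\tau)\ge c$ for almost all $\tau\in]0,1[$. Then for any $z=(L,\xi)\in Z$ with $\|z-z^*\|_{Z^\infty}\le R$ and $R<c$, $$\inf_{0\ne\lambda\in L^2(]0,1[)}\ \sup_{\delta z\in\delta Z}\ \frac{\int_0^1\lambda\,(2\xi_\tau^T\delta\xi_\tau-2L\,\delta L)\,d\tau}{\|\lambda\|_{L^2}\,\|\delta z\|_{Z^2}}\ \ge\ \kappa(R):=(c-R)\Big[\tfrac38+2\Big(\tfrac{\bar v+\bar c_0}{\bar v-\bar c_0}+\tfrac{R}{\tilde L}\Big)^2\Big]^{-1/2}>0.$$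
   Context: Fix an airspeed $\bar v>0$, points $x_O\neq x_D\in\mathbb R^2$, $\tilde L:=\|x_D-x_O\|$, and a wind field $w\in C^3(\mathbb R^2,\mathbb R^2)$ with $\|w(x)\|<\bar v$. Let $\Omega\subset\mathbb R^2$ be an ellipse with foci $x_O,x_D$ containing every globally optimal trajectory, and let $\bar c_0<\bar v$ with $\|w(x)\|\le\bar c_0$ for all $x\in\Omega$. Let $f(x,p)=\frac{-p^Tw(x)+\sqrt{(p^Tw(x))^2+(\bar v^2-w(x)^Tw(x))p^Tp}}{\bar v^2-w(x)^Tw(x)}$, $X=\{\xi\in W^{1,\infty}(]0,1[,\mathbb R^2):\xi(0)=x_O,\xi(1)=x_D\}$, $\delta X=W_0^{1,\infty}(]0,1[,\mathbb R^2)$, $\xi_\tau$ the derivative, $T(\xi)=\int_0^1f(\xi,\xi_\tau)d\tau$. Problem (P): minimize $T(\xi)$ over $\xi\in X$, $L\in\mathbb R$ subject to $\|\xi_\tau(\tau)\|^2=L^2$ for a.a. $\tau$. $Z=\mathbb R\times X$, $\delta Z=\mathbb R\times\delta X$, $\delta z=(\delta L,\delta\xi)$. Norms ($\|\cdot\|$ Euclidean pointwise): $\|z\|_{Z^\infty}=|L|+\|\xi\|_{L^\infty}+\|\xi_\tau\|_{L^\infty}$, $\|z\|_{Z^2}=|L|+\|\xi\|_{L^2}+\|\xi_\tau\|_{L^2}$. *)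

theory Defs
  imports "HOL-Analysis.Analysis"
begin

type_synonym vec2 = "real^2"

text \<open>The interval ]0,1[ (up to a null set) with Lebesgue measure.\<close>
abbreviation M01 :: "real measure" where
  "M01 \<equiv> lebesgue_on {0..1}"

definition C1_map :: "('a::real_normed_vector \<Rightarrow> 'b::real_normed_vector) \<Rightarrow> bool" where
  "C1_map g \<longleftrightarrow> (\<exists>g'. (\<forall>x. (g has_derivative blinfun_apply (g' x)) (at x)) \<and> continuous_on UNIV g')"

definition C2_map :: "('a::real_normed_vector \<Rightarrow> 'b::real_normed_vector) \<Rightarrow> bool" where
  "C2_map g \<longleftrightarrow> (\<exists>g'. (\<forall>x. (g has_derivative blinfun_apply (g' x)) (at x)) \<and> C1_map g')"

definition C3_map :: "('a::real_normed_vector \<Rightarrow> 'b::real_normed_vector) \<Rightarrow> bool" where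
  "C3_map g \<longleftrightarrow> (\<exists>g'. (\<forall>x. (g has_derivative blinfun_apply (g' x)) (at x)) \<and> C2_map g')"

definition ftime :: "real \<Rightarrow> (vec2 \<Rightarrow> vec2) \<Rightarrow> vec2 \<Rightarrow> vec2 \<Rightarrow> real" where
  "ftime vbar w x p =
     (- (p \<bullet> w x) + sqrt ((p \<bullet> w x)\<^sup>2 + (vbar\<^sup>2 - w x \<bullet> w x) * (p \<bullet> p)))
     / (vbar\<^sup>2 - w x \<bullet> w x)"

text \<open>\<open>W1inf xi xi'\<close>: xi (continuous representative on [0,1]) lies in W^{1,\<infinity>}(]0,1[,R^2)
  and xi' is its (weak) derivative: xi' is Lebesgue measurable, essentially bounded on ]0,1[,
  and xi(t) = xi(0) + \<integral>_0^t xi' for all t in [0,1].\<close>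
definition W1inf :: "(real \<Rightarrow> vec2) \<Rightarrow> (real \<Rightarrow> vec2) \<Rightarrow> bool" where
  "W1inf xi xi' \<longleftrightarrow>
     xi' \<in> borel_measurable M01 \<and>
     integrable M01 xi' \<and>
     (\<exists>C. AE t in M01. norm (xi' t) \<le> C) \<and>
     (\<forall>t\<in>{0..1}. xi t = xi 0 + integral\<^sup>L (lebesgue_on {0..t}) xi')"

definition Linf_norm :: "(real \<Rightarrow> 'a::real_normed_vector) \<Rightarrow> real" where
  "Linf_norm g = Inf {C. 0 \<le> C \<and> (AE t in M01. norm (g t) \<le> C)}"

definition L2_norm :: "(real \<Rightarrow> 'a::real_normed_vector) \<Rightarrow> real" where
  "L2_norm g = sqrt (integral\<^sup>L M01 (\<lambda>t. (norm (g t))\<^sup>2))"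

definition L2_fun :: "(real \<Rightarrow> real) \<Rightarrow> bool" where
  "L2_fun g \<longleftrightarrow> g \<in> borel_measurable M01 \<and> integrable M01 (\<lambda>t. (g t)\<^sup>2)"

definition Ttime :: "real \<Rightarrow> (vec2 \<Rightarrow> vec2) \<Rightarrow> (real \<Rightarrow> vec2) \<Rightarrow> (real \<Rightarrow> vec2) \<Rightarrow> real" where
  "Ttime vbar w xi xi' = integral\<^sup>L M01 (\<lambda>t. ftime vbar w (xi t) (xi' t))"

definition in_X :: "vec2 \<Rightarrow> vec2 \<Rightarrow> (real \<Rightarrow> vec2) \<Rightarrow> (real \<Rightarrow> vec2) \<Rightarrow> bool" where
  "in_X xO xD xi xi' \<longleftrightarrow> W1inf xi xi' \<and> xi 0 = xO \<and> xi 1 = xD"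

definition in_dX :: "(real \<Rightarrow> vec2) \<Rightarrow> (real \<Rightarrow> vec2) \<Rightarrow> bool" where
  "in_dX dxi dxi' \<longleftrightarrow> W1inf dxi dxi' \<and> dxi 0 = 0 \<and> dxi 1 = 0"

definition feasibleP :: "vec2 \<Rightarrow> vec2 \<Rightarrow> real \<Rightarrow> (real \<Rightarrow> vec2) \<Rightarrow> (real \<Rightarrow> vec2) \<Rightarrow> bool" where
  "feasibleP xO xD L xi xi' \<longleftrightarrow> in_X xO xD xi xi' \<and> (AE t in M01. (norm (xi' t))\<^sup>2 = L\<^sup>2)"

definition global_min_P ::
  "real \<Rightarrow> (vec2 \<Rightarrow> vec2) \<Rightarrow> vec2 \<Rightarrow> vec2 \<Rightarrow> real \<Rightarrow> (real \<Rightarrow> vec2) \<Rightarrow> (real \<Rightarrow> vec2) \<Rightarrow> bool" where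
  "global_min_P vbar w xO xD L xi xi' \<longleftrightarrow>
     feasibleP xO xD L xi xi' \<and>
     (\<forall>L2 eta eta'. feasibleP xO xD L2 eta eta' \<longrightarrow> Ttime vbar w xi xi' \<le> Ttime vbar w eta eta')"

definition Zinf_norm :: "real \<Rightarrow> (real \<Rightarrow> vec2) \<Rightarrow> (real \<Rightarrow> vec2) \<Rightarrow> real" where
  "Zinf_norm L xi xi' = \<bar>L\<bar> + Linf_norm xi + Linf_norm xi'"

definition Z2_norm :: "real \<Rightarrow> (real \<Rightarrow> vec2) \<Rightarrow> (real \<Rightarrow> vec2) \<Rightarrow> real" where
  "Z2_norm L xi xi' = \<bar>L\<bar> + L2_norm xi + L2_norm xi'"

end

theory Submission
  imports Defs "HOL-Probability.Probability_Measure"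
begin

text \<open>
  Fix a multiplier \<open>lam\<close> with mean \<open>m\<close> and \<open>L\<^sup>2\<close>-norm \<open>ell\<close>. If \<open>|m|\<close> is large compared
  to \<open>ell\<close>, the pure length variation \<open>(dL, dxi) = (-L m, 0)\<close> already gives the quotient
  \<open>2 |L| |m| / ell\<close>. Otherwise vary only the shape, along the fixed direction \<open>u\<close>:
  \<open>dxi' = (lam - m) u\<close> has mean zero, so its primitive vanishes at both ends, and the
  Poincare-type estimate \<open>\<parallel>dxi\<parallel> \<le> \<parallel>lam - m\<parallel> / sqrt 2\<close> controls the \<open>Z\<^sup>2\<close>-norm of the
  direction. Near the minimiser the component \<open>u \<bullet> xi'\<close> stays in \<open>[c - R, |L*| + R]\<close>, which
  bounds the mean of \<open>lam (u \<bullet> xi') (lam - m)\<close> from below by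
  \<open>(c - R) \<parallel>lam - m\<parallel>\<^sup>2 - |L| |m| \<parallel>lam - m\<parallel>\<close>. Since \<open>dxi\<close> has to be Lipschitz, \<open>lam\<close> is
  clipped at level \<open>n\<close> before centering; the strict estimate survives for large \<open>n\<close> by
  dominated convergence.
\<close>

section \<open>Lebesgue measure on the unit interval\<close>

interpretation M01: prob_space M01
  by (rule prob_spaceI) (simp add: emeasure_restrict_space)

lemma measure_M01_space [simp]: "measure M01 {0..1} = 1"
  by (simp add: measure_restrict_space)

lemma integrable_M01_id: "integrable M01 (\<lambda>t. t)"
  by (rule continuous_imp_integrable_real) (intro continuous_intros)

lemma integral_M01_id: "integral\<^sup>L M01 (\<lambda>t. t) = 1/2"
proof -
  have "integral\<^sup>L M01 (\<lambda>t. t) = integral {0..1} (\<lambda>t::real. t)"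
    by (rule lebesgue_integral_eq_integral[OF integrable_M01_id]) auto
  then show ?thesis by simp
qed

lemma AE_M01_ex:
  assumes "AE t in M01. P t"
  shows "\<exists>t. P t"
proof -
  have "AE t in M01. \<exists>t. P t" using assms by (rule eventually_mono) blast
  then show ?thesis by simp
qed

lemma
  fixes g :: "real \<Rightarrow> 'a::real_normed_vector"
  assumes "\<exists>C. AE t in M01. norm (g t) \<le> C"
  shows Linf_norm_nonneg: "0 \<le> Linf_norm g"
    and AE_norm_le_Linf_norm: "AE t in M01. norm (g t) \<le> Linf_norm g"
proof -
  define S where "S = {C. 0 \<le> C \<and> (AE t in M01. norm (g t) \<le> C)}"
  obtain C where "AE t in M01. norm (g t) \<le> C" using assms by blast
  then have "max C 0 \<in> S" unfolding S_def by (auto elim: eventually_mono)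
  then have S: "S \<noteq> {}" by blast
  have Linf: "Linf_norm g = Inf S" unfolding Linf_norm_def S_def ..
  show "0 \<le> Linf_norm g" unfolding Linf using S by (rule cInf_greatest) (auto simp: S_def)
  have "AE t in M01. norm (g t) \<le> Inf S + 1 / Suc n" for n :: nat
  proof -
    obtain C where "C \<in> S" "C < Inf S + 1 / Suc n"
      using cInf_lessD[OF S, of "Inf S + 1 / Suc n"] by auto
    then show ?thesis unfolding S_def by (auto elim: eventually_mono)
  qed
  then have "AE t in M01. \<forall>n::nat. norm (g t) \<le> Inf S + 1 / Suc n"
    by (simp add: AE_all_countable)
  then show "AE t in M01. norm (g t) \<le> Linf_norm g"
  proof (rule eventually_mono)
    fix t assume bound: "\<forall>n::nat. norm (g t) \<le> Inf S + 1 / Suc n"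
    show "norm (g t) \<le> Linf_norm g"
    proof (rule ccontr)
      assume "\<not> ?thesis"
      then obtain n where "1 / real (Suc n) < norm (g t) - Inf S"
        unfolding Linf using reals_Archimedean[of "norm (g t) - Inf S"]
        by (auto simp: inverse_eq_divide)
      with bound show False by (metis add.commute less_diff_eq not_less)
    qed
  qed
qed

lemma (in finite_measure) square_integral_le:
  fixes f :: "'a \<Rightarrow> real"
  assumes [measurable]: "f \<in> borel_measurable M" and sq: "integrable M (\<lambda>x. (f x)\<^sup>2)"
  shows "(integral\<^sup>L M f)\<^sup>2 \<le> measure M (space M) * integral\<^sup>L M (\<lambda>x. (f x)\<^sup>2)"
proof (cases "measure M (space M) = 0")
  case True
  then have "AE x in M. f x = 0"
    by (intro AE_I[where N="space M"]) (auto simp: emeasure_eq_measure)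
  then show ?thesis by (simp add: integral_eq_zero_AE)
next
  case False
  define \<mu> where "\<mu> = measure M (space M)"
  define I where "I = integral\<^sup>L M f"
  define J where "J = integral\<^sup>L M (\<lambda>x. (f x)\<^sup>2)"
  have f: "integrable M f" by (rule square_integrable_imp_integrable[OF _ sq]) simp
  have \<mu>: "0 < \<mu>" using False unfolding \<mu>_def by (simp add: less_le)
  have "0 \<le> integral\<^sup>L M (\<lambda>x. (f x - I / \<mu>)\<^sup>2)"
    by (rule integral_nonneg_AE) simp
  also have "\<dots> = J - 2 * (I / \<mu>) * I + (I / \<mu>)\<^sup>2 * \<mu>"
    using f sq unfolding I_def J_def \<mu>_def power2_diff by simp
  also have "\<dots> = J - I\<^sup>2 / \<mu>"
    using \<mu> by (simp add: field_simps power2_eq_square)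
  finally show ?thesis using \<mu> unfolding I_def J_def \<mu>_def by (simp add: field_simps)
qed

lemma square_integral_M01_le:
  fixes f :: "real \<Rightarrow> real"
  assumes "f \<in> borel_measurable M01" "integrable M01 (\<lambda>t. (f t)\<^sup>2)"
  shows "(integral\<^sup>L M01 f)\<^sup>2 \<le> integral\<^sup>L M01 (\<lambda>t. (f t)\<^sup>2)"
  using M01.square_integral_le[OF assms] by simp

lemma lebesgue_on_initial_segment:
  "t \<le> 1 \<Longrightarrow> lebesgue_on {0..t} = restrict_space M01 {0..t}"
  by (simp add: restrict_restrict_space Int_absorb1)

lemma initial_segment_sets_M01: "{0..t} \<inter> space M01 \<in> sets M01"
  by (auto simp: sets_restrict_space)

lemma initial_segment_in_sets_M01: "t \<le> 1 \<Longrightarrow> {0..t} \<in> sets M01"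
  using initial_segment_sets_M01[of t] by (simp add: Int_absorb2)

lemma integral_initial_segment:
  fixes f :: "real \<Rightarrow> 'a::{banach, second_countable_topology}"
  assumes "t \<le> 1"
  shows "integral\<^sup>L (lebesgue_on {0..t}) f = integral\<^sup>L M01 (\<lambda>s. indicator {0..t} s *\<^sub>R f s)"
  unfolding lebesgue_on_initial_segment[OF assms]
  by (rule integral_restrict_space[OF initial_segment_sets_M01])

lemma integrable_initial_segment:
  fixes f :: "real \<Rightarrow> 'a::{banach, second_countable_topology}"
  assumes "t \<le> 1" "integrable M01 f"
  shows "integrable (lebesgue_on {0..t}) f"
  unfolding lebesgue_on_initial_segment[OF assms(1)]
    integrable_restrict_space[OF initial_segment_sets_M01]
  using initial_segment_in_sets_M01[OF assms(1)] assms(2) by (rule integrable_mult_indicator)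

lemma measurable_initial_segment:
  "t \<le> 1 \<Longrightarrow> f \<in> borel_measurable M01 \<Longrightarrow> f \<in> borel_measurable (lebesgue_on {0..t})"
  unfolding lebesgue_on_initial_segment by (rule measurable_restrict_space1)

lemma integral_initial_segment_le:
  fixes f :: "real \<Rightarrow> real"
  assumes "integrable M01 f" "\<And>s. 0 \<le> f s" "t \<le> 1"
  shows "integral\<^sup>L (lebesgue_on {0..t}) f \<le> integral\<^sup>L M01 f"
proof -
  have "integrable M01 (\<lambda>s. indicator {0..t} s *\<^sub>R f s)"
    using initial_segment_in_sets_M01 assms by (intro integrable_mult_indicator)
  then show ?thesis
    unfolding integral_initial_segment[OF \<open>t \<le> 1\<close>]
    using assms by (intro integral_mono) (auto simp: indicator_def)
qed

lemma W1inf_bounded: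
  assumes "W1inf xi xi'"
  shows "\<exists>C. \<forall>t\<in>{0..1}. norm (xi t) \<le> C"
proof (intro exI ballI)
  fix t :: real assume t: "t \<in> {0..1}"
  have xi': "integrable M01 xi'" using assms unfolding W1inf_def by blast
  have "norm (xi t) \<le> norm (xi 0) + norm (integral\<^sup>L (lebesgue_on {0..t}) xi')"
    using assms t unfolding W1inf_def by (metis norm_triangle_ineq)
  also have "norm (integral\<^sup>L (lebesgue_on {0..t}) xi') \<le> integral\<^sup>L (lebesgue_on {0..t}) (\<lambda>s. norm (xi' s))"
    by (rule integral_norm_bound)
  also have "\<dots> \<le> integral\<^sup>L M01 (\<lambda>s. norm (xi' s))"
    using xi' t by (intro integral_initial_segment_le) auto
  finally show "norm (xi t) \<le> norm (xi 0) + integral\<^sup>L M01 (\<lambda>s. norm (xi' s))"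
    by simp
qed

section \<open>Primitives of bounded functions\<close>

lemma L2_norm_nonneg: "0 \<le> L2_norm g"
  unfolding L2_norm_def by simp

lemma L2_norm_scaleR_unit: "norm u = 1 \<Longrightarrow> L2_norm (\<lambda>s. phi s *\<^sub>R u) = L2_norm phi"
  unfolding L2_norm_def by simp

lemma integral_lebesgue_on_singleton: "integral\<^sup>L (lebesgue_on {a::real}) f = 0"
proof -
  have "ae_filter (lebesgue_on {a}) = bot"
    by (simp add: ae_filter_eq_bot_iff emeasure_restrict_space)
  then have "AE s in lebesgue_on {a}. f s = 0" by (metis eventually_bot)
  then show ?thesis by (rule integral_eq_zero_AE)
qed

lemma in_dX_primitive:
  fixes phi :: "real \<Rightarrow> real"
  assumes [measurable]: "phi \<in> borel_measurable M01"
    and bounded: "\<And>t. \<bar>phi t\<bar> \<le> K" and mean_zero: "integral\<^sup>L M01 phi = 0"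
  shows "in_dX (\<lambda>t. integral\<^sup>L (lebesgue_on {0..t}) (\<lambda>s. phi s *\<^sub>R u)) (\<lambda>s. phi s *\<^sub>R u)"
proof -
  have "integrable M01 phi"
    using bounded by (intro M01.integrable_const_bound[of _ K]) auto
  then show ?thesis
    using bounded mean_zero unfolding in_dX_def W1inf_def
    by (auto simp: integral_lebesgue_on_singleton intro!: exI[of _ "K * norm u"] mult_right_mono)
qed

lemma square_integral_initial_segment_le:
  fixes phi :: "real \<Rightarrow> real"
  assumes phi: "phi \<in> borel_measurable M01" and sq: "integrable M01 (\<lambda>s. (phi s)\<^sup>2)"
    and t: "t \<in> {0..1}"
  shows "(integral\<^sup>L (lebesgue_on {0..t}) phi)\<^sup>2 \<le> t * integral\<^sup>L M01 (\<lambda>s. (phi s)\<^sup>2)"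
proof -
  have "(integral\<^sup>L (lebesgue_on {0..t}) phi)\<^sup>2
      \<le> measure (lebesgue_on {0..t}) {0..t} * integral\<^sup>L (lebesgue_on {0..t}) (\<lambda>s. (phi s)\<^sup>2)"
    using finite_measure.square_integral_le[OF finite_measure_lebesgue_on] t
      measurable_initial_segment[OF _ phi] integrable_initial_segment[OF _ sq]
    by auto
  also have "\<dots> \<le> t * integral\<^sup>L M01 (\<lambda>s. (phi s)\<^sup>2)"
    using t sq by (auto simp: measure_restrict_space intro!: mult_left_mono integral_initial_segment_le)
  finally show ?thesis .
qed

lemma L2_norm_primitive_le:
  fixes phi :: "real \<Rightarrow> real"
  assumes phi: "phi \<in> borel_measurable M01" and sq: "integrable M01 (\<lambda>s. (phi s)\<^sup>2)"
    and u: "norm u = 1"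
  shows "L2_norm (\<lambda>t. integral\<^sup>L (lebesgue_on {0..t}) (\<lambda>s. phi s *\<^sub>R u)) \<le> L2_norm phi / sqrt 2"
proof -
  define q where "q = integral\<^sup>L M01 (\<lambda>s. (phi s)\<^sup>2)"
  have "0 \<le> q" unfolding q_def by simp
  have "integrable M01 phi"
    by (rule M01.square_integrable_imp_integrable[OF phi sq])
  then have "(norm (integral\<^sup>L (lebesgue_on {0..t}) (\<lambda>s. phi s *\<^sub>R u)))\<^sup>2 \<le> t * q"
    if t: "t \<in> {0..1}" for t
  proof -
    have "integrable (lebesgue_on {0..t}) phi"
      using t \<open>integrable M01 phi\<close> by (auto intro: integrable_initial_segment)
    then show ?thesis
      using square_integral_initial_segment_le[OF phi sq t] u unfolding q_def by simp
  qed
  then have "integral\<^sup>L M01 (\<lambda>t. (norm (integral\<^sup>L (lebesgue_on {0..t}) (\<lambda>s. phi s *\<^sub>R u)))\<^sup>2)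
      \<le> integral\<^sup>L M01 (\<lambda>t. t * q)"
    using \<open>0 \<le> q\<close> integrable_M01_id by (intro integral_mono_AE' AE_I2) auto
  also have "\<dots> = q / 2"
    using integral_M01_id by simp
  finally have "L2_norm (\<lambda>t. integral\<^sup>L (lebesgue_on {0..t}) (\<lambda>s. phi s *\<^sub>R u)) \<le> sqrt (q / 2)"
    unfolding L2_norm_def by (rule real_sqrt_le_mono)
  then show ?thesis
    unfolding q_def L2_norm_def by (simp add: real_sqrt_divide)
qed

definition clip :: "nat \<Rightarrow> real \<Rightarrow> real" where
  "clip n x = max (- real n) (min (real n) x)"

lemma abs_clip_le: "\<bar>clip n x\<bar> \<le> \<bar>x\<bar>"
  and abs_clip_le_bound: "\<bar>clip n x\<bar> \<le> real n"
  unfolding clip_def by auto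

lemma clip_tendsto: "(\<lambda>n. clip n x) \<longlonglongrightarrow> x"
proof (rule tendsto_eventually)
  obtain n0 :: nat where "\<bar>x\<bar> \<le> real n0" using real_arch_simple by blast
  then show "\<forall>\<^sub>F n in sequentially. clip n x = x"
    unfolding eventually_sequentially clip_def by (intro exI[of _ n0]) auto
qed

lemma borel_measurable_clip [measurable]:
  "f \<in> borel_measurable M \<Longrightarrow> (\<lambda>x. clip n (f x)) \<in> borel_measurable M"
  unfolding clip_def by (intro borel_measurable_max borel_measurable_min) auto

lemma
  fixes lam a :: "real \<Rightarrow> real"
  assumes [measurable]: "lam \<in> borel_measurable M01" "a \<in> borel_measurable M01"
    and sq: "integrable M01 (\<lambda>t. (lam t)\<^sup>2)" and a: "AE t in M01. \<bar>a t\<bar> \<le> A"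
  defines "phi \<equiv> \<lambda>n t. clip n (lam t) - integral\<^sup>L M01 (\<lambda>s. clip n (lam s))"
  defines "m \<equiv> integral\<^sup>L M01 lam"
  shows centered_clip_weighted_tendsto:
      "(\<lambda>n. integral\<^sup>L M01 (\<lambda>t. lam t * a t * phi n t)) \<longlonglongrightarrow> integral\<^sup>L M01 (\<lambda>t. lam t * a t * (lam t - m))"
    and centered_clip_square_tendsto:
      "(\<lambda>n. integral\<^sup>L M01 (\<lambda>t. (phi n t)\<^sup>2)) \<longlonglongrightarrow> integral\<^sup>L M01 (\<lambda>t. (lam t - m)\<^sup>2)"
proof -
  have lam: "integrable M01 lam"
    by (rule M01.square_integrable_imp_integrable[OF _ sq]) simp
  define K where "K = integral\<^sup>L M01 (\<lambda>t. \<bar>lam t\<bar>)"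
  have clip_int: "integrable M01 (\<lambda>t. clip n (lam t))" for n
    using lam by (rule Bochner_Integration.integrable_bound) (auto simp: abs_clip_le)
  have mean: "(\<lambda>n. integral\<^sup>L M01 (\<lambda>s. clip n (lam s))) \<longlonglongrightarrow> m"
    unfolding m_def using lam
    by (intro integral_dominated_convergence[where w="\<lambda>t. \<bar>lam t\<bar>"])
      (auto simp: abs_clip_le clip_tendsto)
  have mean_bound: "\<bar>integral\<^sup>L M01 (\<lambda>s. clip n (lam s))\<bar> \<le> K" for n
    unfolding K_def using clip_int lam
    by (intro order_trans[OF integral_abs_bound] integral_mono) (auto simp: abs_clip_le)
  have phi_bound: "\<bar>phi n t\<bar> \<le> \<bar>lam t\<bar> + K" for n t
    unfolding phi_def using abs_clip_le[of n "lam t"] mean_bound[of n] by linarith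
  have phi_tendsto: "(\<lambda>n. phi n t) \<longlonglongrightarrow> lam t - m" for t
    unfolding phi_def by (intro tendsto_diff clip_tendsto mean)
  have [measurable]: "phi n \<in> borel_measurable M01" for n
    unfolding phi_def by measurable
  show "(\<lambda>n. integral\<^sup>L M01 (\<lambda>t. lam t * a t * phi n t)) \<longlonglongrightarrow> integral\<^sup>L M01 (\<lambda>t. lam t * a t * (lam t - m))"
  proof (rule integral_dominated_convergence[where w="\<lambda>t. \<bar>A\<bar> * ((lam t)\<^sup>2 + K * \<bar>lam t\<bar>)"])
    show "integrable M01 (\<lambda>t. \<bar>A\<bar> * ((lam t)\<^sup>2 + K * \<bar>lam t\<bar>))"
      using sq lam by simp
    show "AE t in M01. norm (lam t * a t * phi n t) \<le> \<bar>A\<bar> * ((lam t)\<^sup>2 + K * \<bar>lam t\<bar>)" for n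
      using a
    proof eventually_elim
      case (elim t)
      have "\<bar>a t\<bar> * \<bar>phi n t\<bar> \<le> \<bar>A\<bar> * (\<bar>lam t\<bar> + K)"
        using elim phi_bound[of n t] by (intro mult_mono) auto
      then have "\<bar>lam t\<bar> * (\<bar>a t\<bar> * \<bar>phi n t\<bar>) \<le> \<bar>lam t\<bar> * (\<bar>A\<bar> * (\<bar>lam t\<bar> + K))"
        by (rule mult_left_mono) simp
      then show ?case
        by (simp add: abs_mult power2_eq_square algebra_simps)
    qed
  qed (auto intro!: AE_I2 tendsto_intros phi_tendsto)
  show "(\<lambda>n. integral\<^sup>L M01 (\<lambda>t. (phi n t)\<^sup>2)) \<longlonglongrightarrow> integral\<^sup>L M01 (\<lambda>t. (lam t - m)\<^sup>2)"
  proof (rule integral_dominated_convergence[where w="\<lambda>t. 2 * (lam t)\<^sup>2 + 2 * K\<^sup>2"])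
    show "integrable M01 (\<lambda>t. 2 * (lam t)\<^sup>2 + 2 * K\<^sup>2)"
      using sq by simp
    show "AE t in M01. norm ((phi n t)\<^sup>2) \<le> 2 * (lam t)\<^sup>2 + 2 * K\<^sup>2" for n
    proof (rule AE_I2)
      fix t
      have "(phi n t)\<^sup>2 \<le> (\<bar>lam t\<bar> + K)\<^sup>2"
        using phi_bound[of n t] by (metis abs_ge_zero order_trans power2_abs power_mono)
      also have "\<dots> \<le> 2 * (lam t)\<^sup>2 + 2 * K\<^sup>2"
        using zero_le_power2[of "\<bar>lam t\<bar> - K"] by (simp add: power2_eq_square algebra_simps)
      finally show "norm ((phi n t)\<^sup>2) \<le> 2 * (lam t)\<^sup>2 + 2 * K\<^sup>2" by simp
    qed
  qed (auto intro!: AE_I2 tendsto_intros phi_tendsto)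
qed

section \<open>Test directions for the linearised constraint\<close>

lemma variance_M01:
  fixes lam :: "real \<Rightarrow> real"
  assumes "lam \<in> borel_measurable M01" "integrable M01 (\<lambda>t. (lam t)\<^sup>2)"
  shows "integral\<^sup>L M01 (\<lambda>t. (lam t - integral\<^sup>L M01 lam)\<^sup>2) = integral\<^sup>L M01 (\<lambda>t. (lam t)\<^sup>2) - (integral\<^sup>L M01 lam)\<^sup>2"
  using M01.variance_eq M01.square_integrable_imp_integrable[OF assms] assms(2) by simp

lemma centered_weighted_integral_ge:
  fixes lam a :: "real \<Rightarrow> real"
  assumes [measurable]: "lam \<in> borel_measurable M01" "a \<in> borel_measurable M01"
    and sq: "integrable M01 (\<lambda>t. (lam t)\<^sup>2)" and a: "AE t in M01. alo \<le> a t \<and> a t \<le> ahi"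
  defines "m \<equiv> integral\<^sup>L M01 lam"
  defines "n0 \<equiv> sqrt (integral\<^sup>L M01 (\<lambda>t. (lam t - m)\<^sup>2))"
  shows "alo * n0\<^sup>2 - \<bar>m\<bar> * ((ahi - alo) / 2) * n0 \<le> integral\<^sup>L M01 (\<lambda>t. lam t * a t * (lam t - m))"
proof -
  define l0 where "l0 t = lam t - m" for t
  define h where "h = (alo + ahi) / 2"
  define B where "B = (ahi - alo) / 2"
  have [measurable]: "l0 \<in> borel_measurable M01" unfolding l0_def by measurable
  have lam: "integrable M01 lam"
    by (rule M01.square_integrable_imp_integrable[OF _ sq]) simp
  then have l0: "integrable M01 l0" and "integral\<^sup>L M01 l0 = 0"
    unfolding l0_def m_def by auto
  have l0_sq: "integrable M01 (\<lambda>t. (l0 t)\<^sup>2)"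
    using sq lam unfolding l0_def power2_diff by simp
  have n0: "n0\<^sup>2 = integral\<^sup>L M01 (\<lambda>t. (l0 t)\<^sup>2)"
    unfolding n0_def l0_def by simp
  obtain t where "alo \<le> a t \<and> a t \<le> ahi" using AE_M01_ex[OF a] by blast
  then have "0 \<le> B" unfolding B_def by simp
  have a_h: "AE t in M01. \<bar>a t - h\<bar> \<le> B"
    using a unfolding h_def B_def by (rule eventually_mono) (auto simp: abs_if field_simps)
  have "AE t in M01. \<bar>a t\<bar> \<le> \<bar>alo\<bar> + \<bar>ahi\<bar>"
    using a by (rule eventually_mono) auto
  then have al0: "integrable M01 (\<lambda>t. a t * (l0 t)\<^sup>2)"
    by (intro Bochner_Integration.integrable_bound[OF integrable_mult_left[OF l0_sq, of "\<bar>alo\<bar> + \<bar>ahi\<bar>"]])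
      (auto elim!: eventually_mono simp: abs_mult mult.commute[of _ "\<bar>alo\<bar> + \<bar>ahi\<bar>"] intro!: mult_right_mono)
  have ahl0: "integrable M01 (\<lambda>t. (a t - h) * l0 t)"
    by (rule Bochner_Integration.integrable_bound[OF integrable_mult_left[OF integrable_abs[OF l0], of B]])
      (use a_h in \<open>auto elim!: eventually_mono simp: abs_mult mult.commute[of _ B] intro!: mult_right_mono\<close>)
  have split: "lam t * a t * (lam t - m) = a t * (l0 t)\<^sup>2 + m * ((a t - h) * l0 t) + m * h * l0 t" for t
    unfolding l0_def by (simp add: power2_eq_square algebra_simps)
  have "integral\<^sup>L M01 (\<lambda>t. lam t * a t * (lam t - m))
      = integral\<^sup>L M01 (\<lambda>t. a t * (l0 t)\<^sup>2) + m * integral\<^sup>L M01 (\<lambda>t. (a t - h) * l0 t)"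
    unfolding split using al0 ahl0 l0 \<open>integral\<^sup>L M01 l0 = 0\<close> by simp
  moreover have "alo * n0\<^sup>2 \<le> integral\<^sup>L M01 (\<lambda>t. a t * (l0 t)\<^sup>2)"
    unfolding n0 integral_mult_right_zero[symmetric]
    using a l0_sq al0 by (intro integral_mono_AE) (auto elim!: eventually_mono intro: mult_right_mono)
  moreover have "\<bar>integral\<^sup>L M01 (\<lambda>t. (a t - h) * l0 t)\<bar> \<le> B * n0"
  proof -
    have "(integral\<^sup>L M01 (\<lambda>t. \<bar>l0 t\<bar>))\<^sup>2 \<le> n0\<^sup>2"
      using square_integral_M01_le[of "\<lambda>t. \<bar>l0 t\<bar>"] l0_sq unfolding n0 by simp
    then have abs_l0: "integral\<^sup>L M01 (\<lambda>t. \<bar>l0 t\<bar>) \<le> n0"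
      by (rule power2_le_imp_le) (simp add: n0_def)
    have "\<bar>integral\<^sup>L M01 (\<lambda>t. (a t - h) * l0 t)\<bar> \<le> integral\<^sup>L M01 (\<lambda>t. B * \<bar>l0 t\<bar>)"
      using a_h integrable_abs[OF ahl0] l0
      by (intro order_trans[OF integral_abs_bound] integral_mono_AE)
        (auto elim!: eventually_mono simp: abs_mult intro: mult_right_mono)
    also have "\<dots> \<le> B * n0"
      using abs_l0 \<open>0 \<le> B\<close> by (simp add: mult_left_mono)
    finally show ?thesis .
  qed
  then have "\<bar>m * integral\<^sup>L M01 (\<lambda>t. (a t - h) * l0 t)\<bar> \<le> \<bar>m\<bar> * B * n0"
    by (simp add: abs_mult mult.assoc mult_left_mono)
  then have "- (\<bar>m\<bar> * B * n0) \<le> m * integral\<^sup>L M01 (\<lambda>t. (a t - h) * l0 t)"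
    by linarith
  ultimately show ?thesis unfolding B_def by linarith
qed

(* The shape direction has Z2-norm at most (1 + 1/sqrt 2) times that of its derivative,
   and 1 + 1/sqrt 2 \<le> 7/4; this is where the factor 7/8 comes from. *)
lemma small_mean_ratio_arith:
  fixes L m ell kap cc n0 N0 :: real
  assumes small_mean: "2 * \<bar>L\<bar> * \<bar>m\<bar> < kap * ell"
    and kap: "0 < kap" and ell: "0 < ell" and cc: "3 * kap \<le> 2 * cc" "cc \<le> \<bar>L\<bar>"
    and n0: "n0 = sqrt (ell\<^sup>2 - m\<^sup>2)" and N0: "cc * n0\<^sup>2 - \<bar>L\<bar> * \<bar>m\<bar> * n0 \<le> N0"
  shows "0 < n0" "7/8 * kap * ell * n0 < N0"
proof -
  have "2 * \<bar>L\<bar> * (3 * \<bar>m\<bar>) < 2 * \<bar>L\<bar> * ell"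
  proof -
    have "2 * \<bar>L\<bar> * (3 * \<bar>m\<bar>) < 3 * kap * ell" using small_mean by linarith
    also have "\<dots> \<le> 2 * \<bar>L\<bar> * ell" using cc ell by (intro mult_right_mono) auto
    finally show ?thesis .
  qed
  then have "3 * \<bar>m\<bar> < ell" by (rule mult_left_less_imp_less) simp
  then have "(3 * \<bar>m\<bar>)\<^sup>2 < ell\<^sup>2" by (intro power_strict_mono) auto
  moreover have "(15/16 * ell)\<^sup>2 = 225/256 * ell\<^sup>2" "(3 * \<bar>m\<bar>)\<^sup>2 = 9 * m\<^sup>2"
    by (simp_all add: power2_eq_square)
  ultimately have "(15/16 * ell)\<^sup>2 \<le> ell\<^sup>2 - m\<^sup>2"
    using zero_le_power2[of ell] by linarith
  then have n0_ge: "15/16 * ell \<le> n0" unfolding n0 by (rule real_le_rsqrt)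
  then show "0 < n0" using ell by linarith
  have "7/8 * kap * ell < cc * n0 - kap * ell / 2"
  proof -
    have "3/2 * kap * (15/16 * ell) \<le> cc * n0"
      using cc kap ell n0_ge by (intro mult_mono) auto
    then show ?thesis using mult_pos_pos[OF kap ell] by linarith
  qed
  moreover have "\<bar>L\<bar> * \<bar>m\<bar> \<le> kap * ell / 2" using small_mean by linarith
  ultimately have "7/8 * kap * ell < cc * n0 - \<bar>L\<bar> * \<bar>m\<bar>" by linarith
  then have "7/8 * kap * ell * n0 < (cc * n0 - \<bar>L\<bar> * \<bar>m\<bar>) * n0"
    using \<open>0 < n0\<close> by (rule mult_strict_right_mono)
  with N0 show "7/8 * kap * ell * n0 < N0" by (simp add: power2_eq_square algebra_simps)
qed

lemma exists_bounded_centered_test_function: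
  fixes lam a :: "real \<Rightarrow> real"
  assumes [measurable]: "lam \<in> borel_measurable M01" "a \<in> borel_measurable M01"
    and sq: "integrable M01 (\<lambda>t. (lam t)\<^sup>2)" and a: "AE t in M01. \<bar>a t\<bar> \<le> A"
    and m: "m = integral\<^sup>L M01 lam"
    and pos: "0 < integral\<^sup>L M01 (\<lambda>t. (lam t - m)\<^sup>2)"
    and gt: "r * sqrt (integral\<^sup>L M01 (\<lambda>t. (lam t - m)\<^sup>2)) < integral\<^sup>L M01 (\<lambda>t. lam t * a t * (lam t - m))"
  shows "\<exists>phi K. phi \<in> borel_measurable M01 \<and> (\<forall>t. \<bar>phi t\<bar> \<le> K) \<and> integral\<^sup>L M01 phi = 0
    \<and> 0 < L2_norm phi \<and> r * L2_norm phi < integral\<^sup>L M01 (\<lambda>t. lam t * a t * phi t)"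
proof -
  define phi where "phi n t = clip n (lam t) - integral\<^sup>L M01 (\<lambda>s. clip n (lam s))" for n t
  have L2: "L2_norm (phi n) = sqrt (integral\<^sup>L M01 (\<lambda>t. (phi n t)\<^sup>2))" for n
    unfolding L2_norm_def by simp
  have norm_lim: "(\<lambda>n. L2_norm (phi n)) \<longlonglongrightarrow> sqrt (integral\<^sup>L M01 (\<lambda>t. (lam t - m)\<^sup>2))"
    unfolding L2 phi_def m
    by (intro tendsto_real_sqrt centered_clip_square_tendsto[OF assms(1,2) sq a])
  have gap_lim: "(\<lambda>n. integral\<^sup>L M01 (\<lambda>t. lam t * a t * phi n t) - r * L2_norm (phi n))
      \<longlonglongrightarrow> integral\<^sup>L M01 (\<lambda>t. lam t * a t * (lam t - m)) - r * sqrt (integral\<^sup>L M01 (\<lambda>t. (lam t - m)\<^sup>2))"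
    unfolding L2 phi_def m
    by (intro tendsto_intros centered_clip_weighted_tendsto[OF assms(1,2) sq a]
        centered_clip_square_tendsto[OF assms(1,2) sq a])
  have "\<forall>\<^sub>F n in sequentially. 0 < L2_norm (phi n)
      \<and> 0 < integral\<^sup>L M01 (\<lambda>t. lam t * a t * phi n t) - r * L2_norm (phi n)"
    using order_tendstoD(1)[OF norm_lim, of 0] order_tendstoD(1)[OF gap_lim, of 0] pos gt
    by (intro eventually_conj) auto
  then obtain n where n: "0 < L2_norm (phi n)" "r * L2_norm (phi n) < integral\<^sup>L M01 (\<lambda>t. lam t * a t * phi n t)"
    by (auto simp: eventually_sequentially)
  have "integrable M01 (\<lambda>t. clip n (lam t))"
    by (intro M01.integrable_const_bound[of _ "real n"])
      (auto simp: abs_clip_le_bound)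
  then have "integral\<^sup>L M01 (phi n) = 0"
    unfolding phi_def by simp
  moreover have "\<bar>phi n t\<bar> \<le> real n + \<bar>integral\<^sup>L M01 (\<lambda>s. clip n (lam s))\<bar>" for t
    unfolding phi_def using abs_clip_le_bound[of n "lam t"] by linarith
  moreover have "phi n \<in> borel_measurable M01" unfolding phi_def by measurable
  ultimately show ?thesis using n by blast
qed

text \<open>The quotient in the inf-sup condition: the linearisation of the constraint
  \<open>\<parallel>\<xi>\<^sub>\<tau>\<parallel>\<^sup>2 = L\<^sup>2\<close> at \<open>(L, \<xi>)\<close> in direction \<open>(dL, dxi)\<close>, tested against the multiplier \<open>lam\<close>.\<close>
definition constraint_ratio ::
    "real \<Rightarrow> (real \<Rightarrow> vec2) \<Rightarrow> (real \<Rightarrow> real) \<Rightarrow> real \<Rightarrow> (real \<Rightarrow> vec2) \<Rightarrow> (real \<Rightarrow> vec2) \<Rightarrow> real"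
  where "constraint_ratio L xi' lam dL dxi dxi' =
    integral\<^sup>L M01 (\<lambda>t. lam t * (2 * (xi' t \<bullet> dxi' t) - 2 * L * dL)) / (L2_norm lam * Z2_norm dL dxi dxi')"

lemma in_dX_zero: "in_dX (\<lambda>t. 0) (\<lambda>t. 0)"
  unfolding in_dX_def W1inf_def by auto

lemma constraint_ratio_length_variation:
  "constraint_ratio L xi' lam (- L * integral\<^sup>L M01 lam) (\<lambda>t. 0) (\<lambda>t. 0)
     = 2 * \<bar>L\<bar> * \<bar>integral\<^sup>L M01 lam\<bar> / L2_norm lam"
proof -
  define m where "m = integral\<^sup>L M01 lam"
  have "2 * \<bar>L\<bar> * \<bar>m\<bar> * (\<bar>L\<bar> * \<bar>m\<bar>) = 2 * (L * L) * (m * m)"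
    by (simp add: abs_mult_self_eq algebra_simps)
  then have num: "integral\<^sup>L M01 (\<lambda>t. lam t * (2 * (xi' t \<bullet> 0) - 2 * L * (- L * m)))
      = 2 * \<bar>L\<bar> * \<bar>m\<bar> * (\<bar>L\<bar> * \<bar>m\<bar>)"
    by (simp add: m_def[symmetric] algebra_simps)
  have Z: "Z2_norm (- L * m) (\<lambda>t. 0) (\<lambda>t. 0) = \<bar>L\<bar> * \<bar>m\<bar>"
    unfolding Z2_norm_def L2_norm_def by (simp add: abs_mult)
  have "constraint_ratio L xi' lam (- L * m) (\<lambda>t. 0) (\<lambda>t. 0)
      = 2 * \<bar>L\<bar> * \<bar>m\<bar> * (\<bar>L\<bar> * \<bar>m\<bar>) / (L2_norm lam * (\<bar>L\<bar> * \<bar>m\<bar>))"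
    unfolding constraint_ratio_def num Z ..
  also have "\<dots> = 2 * \<bar>L\<bar> * \<bar>m\<bar> / L2_norm lam"
    by (cases "\<bar>L\<bar> * \<bar>m\<bar> = 0") simp_all
  finally show ?thesis unfolding m_def .
qed

lemma constraint_ratio_shape_variation:
  fixes phi :: "real \<Rightarrow> real"
  assumes phi: "phi \<in> borel_measurable M01" "\<And>t. \<bar>phi t\<bar> \<le> K" "integral\<^sup>L M01 phi = 0"
    and u: "norm u = 1" and pos: "0 < L2_norm phi" "0 < kap" "0 < L2_norm lam"
    and gt: "7/8 * kap * L2_norm lam * L2_norm phi \<le> integral\<^sup>L M01 (\<lambda>t. lam t * (u \<bullet> xi' t) * phi t)"
  defines "dxi \<equiv> \<lambda>t. integral\<^sup>L (lebesgue_on {0..t}) (\<lambda>s. phi s *\<^sub>R u)"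
  shows "in_dX dxi (\<lambda>s. phi s *\<^sub>R u)" "Z2_norm 0 dxi (\<lambda>s. phi s *\<^sub>R u) \<noteq> 0"
    "kap \<le> constraint_ratio L xi' lam 0 dxi (\<lambda>s. phi s *\<^sub>R u)"
proof -
  show "in_dX dxi (\<lambda>s. phi s *\<^sub>R u)"
    unfolding dxi_def using phi by (rule in_dX_primitive)
  have "integrable M01 (\<lambda>t. (phi t)\<^sup>2)"
  proof (rule M01.integrable_const_bound[of _ "K\<^sup>2"])
    show "AE t in M01. norm ((phi t)\<^sup>2) \<le> K\<^sup>2"
      using phi(2) by (intro AE_I2) (metis abs_ge_zero norm_power power2_abs power_mono real_norm_def)
  qed (use phi in auto)
  then have "L2_norm dxi \<le> L2_norm phi / sqrt 2"
    unfolding dxi_def by (rule L2_norm_primitive_le[OF phi(1) _ u])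
  also have "\<dots> \<le> 3/4 * L2_norm phi"
  proof -
    have "4/3 \<le> sqrt 2" by (rule real_le_rsqrt) (simp add: power2_eq_square)
    then show ?thesis using pos by (simp add: field_simps)
  qed
  moreover have "Z2_norm 0 dxi (\<lambda>s. phi s *\<^sub>R u) = L2_norm dxi + L2_norm phi"
    unfolding Z2_norm_def L2_norm_scaleR_unit[OF u] by simp
  ultimately have Z: "0 < Z2_norm 0 dxi (\<lambda>s. phi s *\<^sub>R u)"
      "Z2_norm 0 dxi (\<lambda>s. phi s *\<^sub>R u) \<le> 7/4 * L2_norm phi"
    using pos L2_norm_nonneg[of dxi] by linarith+
  then show "Z2_norm 0 dxi (\<lambda>s. phi s *\<^sub>R u) \<noteq> 0" by simp
  have "kap * (L2_norm lam * Z2_norm 0 dxi (\<lambda>s. phi s *\<^sub>R u)) \<le> kap * (L2_norm lam * (7/4 * L2_norm phi))"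
    using Z pos by (intro mult_left_mono) auto
  also have "\<dots> \<le> 2 * integral\<^sup>L M01 (\<lambda>t. lam t * (u \<bullet> xi' t) * phi t)"
    using gt by simp
  also have "\<dots> = integral\<^sup>L M01 (\<lambda>t. 2 * (lam t * (u \<bullet> xi' t) * phi t))"
    by simp
  also have "\<dots> = integral\<^sup>L M01 (\<lambda>t. lam t * (2 * (xi' t \<bullet> phi t *\<^sub>R u) - 2 * L * 0))"
    by (simp add: inner_commute mult.commute mult.left_commute)
  finally show "kap \<le> constraint_ratio L xi' lam 0 dxi (\<lambda>s. phi s *\<^sub>R u)"
    unfolding constraint_ratio_def using Z pos by (simp add: pos_le_divide_eq)
qed

lemma exists_direction_constraint_ratio_ge:
  fixes lam :: "real \<Rightarrow> real" and xi' :: "real \<Rightarrow> vec2"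
  assumes lam: "L2_fun lam" "L2_norm lam \<noteq> 0"
    and [measurable]: "xi' \<in> borel_measurable M01" and u: "norm u = 1"
    and a: "AE t in M01. alo \<le> u \<bullet> xi' t \<and> u \<bullet> xi' t \<le> ahi"
    and cc: "cc \<le> alo" "cc \<le> \<bar>L\<bar>" and width: "ahi - alo \<le> 2 * \<bar>L\<bar>"
    and kap: "0 < kap" "3 * kap \<le> 2 * cc"
  shows "\<exists>dL dxi dxi'. in_dX dxi dxi' \<and> Z2_norm dL dxi dxi' \<noteq> 0 \<and> kap \<le> constraint_ratio L xi' lam dL dxi dxi'"
proof -
  have [measurable]: "lam \<in> borel_measurable M01" and sq: "integrable M01 (\<lambda>t. (lam t)\<^sup>2)"
    using lam(1) unfolding L2_fun_def by auto
  define ell where "ell = L2_norm lam"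
  define m where "m = integral\<^sup>L M01 lam"
  have ell: "0 < ell" using lam(2) L2_norm_nonneg[of lam] unfolding ell_def by linarith
  show ?thesis
  proof (cases "kap * ell \<le> 2 * \<bar>L\<bar> * \<bar>m\<bar>")
    case True
    then have "0 < \<bar>L\<bar> * \<bar>m\<bar>" using mult_pos_pos[OF kap(1) ell] by linarith
    moreover have "Z2_norm (- L * m) (\<lambda>t. 0) (\<lambda>t. 0) = \<bar>L\<bar> * \<bar>m\<bar>"
      unfolding Z2_norm_def L2_norm_def by (simp add: abs_mult)
    ultimately have "Z2_norm (- L * m) (\<lambda>t. 0) (\<lambda>t. 0) \<noteq> 0" by linarith
    moreover have "kap \<le> constraint_ratio L xi' lam (- L * m) (\<lambda>t. 0) (\<lambda>t. 0)"
    proof -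
      have "kap \<le> 2 * \<bar>L\<bar> * \<bar>m\<bar> / ell"
        using True ell by (simp add: pos_le_divide_eq)
      then show ?thesis unfolding m_def ell_def constraint_ratio_length_variation .
    qed
    ultimately show ?thesis using in_dX_zero by blast
  next
    case False
    define n0 where "n0 = sqrt (integral\<^sup>L M01 (\<lambda>t. (lam t - m)\<^sup>2))"
    define N0 where "N0 = integral\<^sup>L M01 (\<lambda>t. lam t * (u \<bullet> xi' t) * (lam t - m))"
    have "ell\<^sup>2 = integral\<^sup>L M01 (\<lambda>t. (lam t)\<^sup>2)"
      unfolding ell_def L2_norm_def by simp
    then have n0_eq: "n0 = sqrt (ell\<^sup>2 - m\<^sup>2)"
      unfolding n0_def m_def using variance_M01[OF _ sq] by simp
    have N0_ge: "cc * n0\<^sup>2 - \<bar>L\<bar> * \<bar>m\<bar> * n0 \<le> N0"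
    proof -
      have "cc * n0\<^sup>2 \<le> alo * n0\<^sup>2" using cc by (intro mult_right_mono) auto
      moreover have "\<bar>m\<bar> * ((ahi - alo) / 2) \<le> \<bar>L\<bar> * \<bar>m\<bar>"
        using width mult_left_mono[of "(ahi - alo) / 2" "\<bar>L\<bar>" "\<bar>m\<bar>"] by (simp add: mult.commute)
      then have "\<bar>m\<bar> * ((ahi - alo) / 2) * n0 \<le> \<bar>L\<bar> * \<bar>m\<bar> * n0"
        by (rule mult_right_mono) (simp add: n0_def)
      moreover have "alo * n0\<^sup>2 - \<bar>m\<bar> * ((ahi - alo) / 2) * n0 \<le> N0"
        unfolding n0_def N0_def m_def by (rule centered_weighted_integral_ge[OF _ _ sq a]) auto
      ultimately show ?thesis by linarith
    qed
    have "2 * \<bar>L\<bar> * \<bar>m\<bar> < kap * ell" using False by linarith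
    note arith = small_mean_ratio_arith[OF this kap(1) ell kap(2) cc(2) n0_eq N0_ge]
    have a_bound: "AE t in M01. \<bar>u \<bullet> xi' t\<bar> \<le> \<bar>alo\<bar> + \<bar>ahi\<bar>"
      using a by (rule eventually_mono) auto
    have var_pos: "0 < integral\<^sup>L M01 (\<lambda>t. (lam t - m)\<^sup>2)"
      using arith(1) unfolding n0_def by simp
    obtain phi K where phi: "phi \<in> borel_measurable M01" "\<forall>t. \<bar>phi t\<bar> \<le> K"
        "integral\<^sup>L M01 phi = 0" "0 < L2_norm phi"
      and gt: "7/8 * kap * ell * L2_norm phi < integral\<^sup>L M01 (\<lambda>t. lam t * (u \<bullet> xi' t) * phi t)"
      using exists_bounded_centered_test_function[OF _ _ sq a_bound m_def var_pos
          arith(2)[unfolded n0_def N0_def]]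
      by fastforce
    show ?thesis
      using constraint_ratio_shape_variation[OF phi(1) phi(2)[rule_format] phi(3) u phi(4) kap(1) ell[unfolded ell_def]
          less_imp_le[OF gt[unfolded ell_def]]]
      by blast
  qed
qed

lemma inf_sup_constraint_ratio_ge:
  fixes xi' :: "real \<Rightarrow> vec2"
  assumes "xi' \<in> borel_measurable M01" "norm u = 1"
    and "AE t in M01. alo \<le> u \<bullet> xi' t \<and> u \<bullet> xi' t \<le> ahi"
    and "cc \<le> alo" "cc \<le> \<bar>L\<bar>" "ahi - alo \<le> 2 * \<bar>L\<bar>" "0 < kap" "3 * kap \<le> 2 * cc"
  shows "ereal kap \<le> (INF lam \<in> {lam. L2_fun lam \<and> L2_norm lam \<noteq> 0}.
            SUP dz \<in> {(dL, dxi, dxi'). in_dX dxi dxi' \<and> Z2_norm dL dxi dxi' \<noteq> 0}.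
              (case dz of (dL, dxi, dxi') \<Rightarrow>
                 ereal (integral\<^sup>L M01 (\<lambda>t. lam t * (2 * (xi' t \<bullet> dxi' t) - 2 * L * dL))
                        / (L2_norm lam * Z2_norm dL dxi dxi'))))"
proof (rule INF_greatest)
  fix lam assume "lam \<in> {lam. L2_fun lam \<and> L2_norm lam \<noteq> 0}"
  then obtain dL dxi dxi' where "in_dX dxi dxi'" "Z2_norm dL dxi dxi' \<noteq> 0"
    "kap \<le> constraint_ratio L xi' lam dL dxi dxi'"
    using exists_direction_constraint_ratio_ge[OF _ _ assms] by blast
  then show "ereal kap \<le> (SUP dz \<in> {(dL, dxi, dxi'). in_dX dxi dxi' \<and> Z2_norm dL dxi dxi' \<noteq> 0}.
              (case dz of (dL, dxi, dxi') \<Rightarrow>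
                 ereal (integral\<^sup>L M01 (\<lambda>t. lam t * (2 * (xi' t \<bullet> dxi' t) - 2 * L * dL))
                        / (L2_norm lam * Z2_norm dL dxi dxi'))))"
    unfolding constraint_ratio_def by (intro SUP_upper2[of "(dL, dxi, dxi')"]) auto
qed

section \<open>The perturbed trajectory\<close>

(* The bound on xi - xistar only serves to make its Linf_norm nonnegative: for an
   essentially unbounded function Linf_norm is the Inf of the empty set. *)
lemma Zinf_norm_derivative_bound:
  assumes "W1inf xi xi'" "W1inf xistar xistar'"
  obtains d where "0 \<le> d" "\<bar>L - Lstar\<bar> + d \<le> Zinf_norm (L - Lstar) (\<lambda>t. xi t - xistar t) (\<lambda>t. xi' t - xistar' t)"
    "AE t in M01. norm (xi' t - xistar' t) \<le> d"
proof -
  obtain C C' where "AE t in M01. norm (xi' t) \<le> C" "AE t in M01. norm (xistar' t) \<le> C'"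
    using assms unfolding W1inf_def by blast
  then have "AE t in M01. norm (xi' t - xistar' t) \<le> C + C'"
    by eventually_elim (metis add_mono norm_triangle_ineq4 order_trans)
  then have derivative: "\<exists>C. AE t in M01. norm (xi' t - xistar' t) \<le> C" by blast
  obtain D D' where "\<forall>t\<in>{0..1}. norm (xi t) \<le> D" "\<forall>t\<in>{0..1}. norm (xistar t) \<le> D'"
    using W1inf_bounded assms by metis
  then have "AE t in M01. norm (xi t - xistar t) \<le> D + D'"
    by (intro AE_I2) (metis add_mono norm_triangle_ineq4 order_trans space_lebesgue_on)
  then have "0 \<le> Linf_norm (\<lambda>t. xi t - xistar t)"
    by (intro Linf_norm_nonneg) blast
  then show ?thesis
    using that Linf_norm_nonneg[OF derivative] AE_norm_le_Linf_norm[OF derivative]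
    unfolding Zinf_norm_def by auto
qed

lemma direction_component_bounds:
  fixes u :: vec2
  assumes speed: "AE t in M01. (norm (xistar' t))\<^sup>2 = Lstar\<^sup>2"
    and dir: "AE t in M01. c \<le> u \<bullet> xistar' t" and u: "norm u = 1"
    and close: "AE t in M01. norm (xi' t - xistar' t) \<le> d"
  shows "c \<le> \<bar>Lstar\<bar>" "AE t in M01. c - d \<le> u \<bullet> xi' t \<and> u \<bullet> xi' t \<le> \<bar>Lstar\<bar> + d"
proof -
  have bounds: "AE t in M01. c \<le> u \<bullet> xistar' t \<and> u \<bullet> xistar' t \<le> \<bar>Lstar\<bar>
      \<and> \<bar>u \<bullet> xi' t - u \<bullet> xistar' t\<bar> \<le> d"
    using speed dir close
  proof eventually_elim
    case (elim t)
    have "norm (xistar' t) = \<bar>Lstar\<bar>"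
      using elim(1) by (metis norm_ge_zero real_sqrt_abs real_sqrt_unique)
    moreover have "\<bar>u \<bullet> (xi' t - xistar' t)\<bar> \<le> d"
      using Cauchy_Schwarz_ineq2[of u "xi' t - xistar' t"] u elim(3) by simp
    ultimately show ?case
      using elim(2) norm_cauchy_schwarz[of u "xistar' t"] u by (simp add: inner_diff_right)
  qed
  then show "c \<le> \<bar>Lstar\<bar>" using AE_M01_ex by fastforce
  show "AE t in M01. c - d \<le> u \<bullet> xi' t \<and> u \<bullet> xi' t \<le> \<bar>Lstar\<bar> + d"
    using bounds by eventually_elim (auto simp: abs_le_iff)
qed

lemma inf_sup_constant_bounds:
  fixes vbar c0 c R D :: real
  assumes "0 \<le> c0" "c0 < vbar" "0 \<le> R" "R < c" "0 \<le> D"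
  defines "kap \<equiv> (c - R) / sqrt (3/8 + 2 * ((vbar + c0) / (vbar - c0) + R / D)\<^sup>2)"
  shows "0 < kap" "3 * kap \<le> 2 * (c - R)"
proof -
  define X where "X = (vbar + c0) / (vbar - c0) + R / D"
  define Q where "Q = sqrt (3/8 + 2 * X\<^sup>2)"
  have "1 \<le> (vbar + c0) / (vbar - c0)" using assms by (simp add: le_divide_eq)
  moreover have "0 \<le> R / D" using assms by simp
  ultimately have "1 \<le> X" unfolding X_def by linarith
  then have "(3/2)\<^sup>2 \<le> 3/8 + 2 * X\<^sup>2" using power_mono[of 1 X 2] by (simp add: power2_eq_square)
  then have Q: "3/2 \<le> Q" unfolding Q_def by (rule real_le_rsqrt)
  have kap: "kap = (c - R) / Q" unfolding kap_def Q_def X_def ..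
  show "0 < kap" unfolding kap using Q assms by simp
  have "3 * (c - R) \<le> 2 * (c - R) * Q" using mult_left_mono[OF Q, of "2 * (c - R)"] assms by simp
  then show "3 * kap \<le> 2 * (c - R)" unfolding kap using Q by (simp add: pos_divide_le_eq)
qed

theorem theorem8:
  fixes vbar c0 c R Lstar L :: real
    and xO xD u :: vec2
    and w :: "vec2 \<Rightarrow> vec2"
    and \<Omega> :: "vec2 set"
    and xistar xistar' xi xi' :: "real \<Rightarrow> vec2"
  assumes vbar_pos: "vbar > 0"
    and foci: "xO \<noteq> xD"
    and w_C3: "C3_map w"
    and w_bound: "\<forall>x. norm (w x) < vbar"
    and ellipse: "\<exists>a > dist xO xD. \<Omega> = {x. dist x xO + dist x xD \<le> a}"
    and Omega_contains: "\<forall>L1 eta eta'. global_min_P vbar w xO xD L1 eta eta' \<longrightarrow>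
                            (\<forall>t\<in>{0..1}. eta t \<in> \<Omega>)"
    and c0_lt: "c0 < vbar"
    and c0_bound: "\<forall>x\<in>\<Omega>. norm (w x) \<le> c0"
    and zstar_min: "global_min_P vbar w xO xD Lstar xistar xistar'"
    and c_pos: "c > 0"
    and u_unit: "norm u = 1"
    and u_dir: "AE t in M01. u \<bullet> xistar' t \<ge> c"
    and z_in_Z: "in_X xO xD xi xi'"
    and z_close: "Zinf_norm (L - Lstar) (\<lambda>t. xi t - xistar t) (\<lambda>t. xi' t - xistar' t) \<le> R"
    and R_lt_c: "R < c"
  shows "(INF lam \<in> {lam. L2_fun lam \<and> L2_norm lam \<noteq> 0}.
            SUP dz \<in> {(dL, dxi, dxi'). in_dX dxi dxi' \<and> Z2_norm dL dxi dxi' \<noteq> 0}.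
              (case dz of (dL, dxi, dxi') \<Rightarrow>
                 ereal (integral\<^sup>L M01 (\<lambda>t. lam t * (2 * (xi' t \<bullet> dxi' t) - 2 * L * dL))
                        / (L2_norm lam * Z2_norm dL dxi dxi'))))
         \<ge> ereal ((c - R) / sqrt (3/8 + 2 * ((vbar + c0) / (vbar - c0) + R / dist xO xD)\<^sup>2))
       \<and> (c - R) / sqrt (3/8 + 2 * ((vbar + c0) / (vbar - c0) + R / dist xO xD)\<^sup>2) > 0"
proof -
  have xi: "W1inf xi xi'" and xistar: "W1inf xistar xistar'"
    and speed: "AE t in M01. (norm (xistar' t))\<^sup>2 = Lstar\<^sup>2"
    using z_in_Z zstar_min unfolding in_X_def global_min_P_def feasibleP_def by auto
  obtain d where d: "0 \<le> d" "AE t in M01. norm (xi' t - xistar' t) \<le> d"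
    and "\<bar>L - Lstar\<bar> + d \<le> Zinf_norm (L - Lstar) (\<lambda>t. xi t - xistar t) (\<lambda>t. xi' t - xistar' t)"
    by (rule Zinf_norm_derivative_bound[OF xi xistar])
  with z_close have dR: "\<bar>L - Lstar\<bar> + d \<le> R" by linarith
  note component = direction_component_bounds[OF speed u_dir u_unit d(2)]
  have "xO \<in> \<Omega>" using ellipse by auto
  then have c0: "0 \<le> c0" using c0_bound norm_ge_zero order_trans by blast
  have R: "0 \<le> R" using d(1) dR by linarith
  note kappa = inf_sup_constant_bounds[OF c0 c0_lt R R_lt_c zero_le_dist]
  have xi': "xi' \<in> borel_measurable M01" using xi unfolding W1inf_def by blast
  have Lstar: "\<bar>Lstar\<bar> \<le> \<bar>L\<bar> + \<bar>L - Lstar\<bar>" by linarith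
  have "ereal ((c - R) / sqrt (3/8 + 2 * ((vbar + c0) / (vbar - c0) + R / dist xO xD)\<^sup>2))
      \<le> (INF lam \<in> {lam. L2_fun lam \<and> L2_norm lam \<noteq> 0}.
            SUP dz \<in> {(dL, dxi, dxi'). in_dX dxi dxi' \<and> Z2_norm dL dxi dxi' \<noteq> 0}.
              (case dz of (dL, dxi, dxi') \<Rightarrow>
                 ereal (integral\<^sup>L M01 (\<lambda>t. lam t * (2 * (xi' t \<bullet> dxi' t) - 2 * L * dL))
                        / (L2_norm lam * Z2_norm dL dxi dxi'))))"
    by (rule inf_sup_constraint_ratio_ge[OF xi' u_unit component(2) _ _ _ kappa])
      (use component(1) d(1) dR R_lt_c Lstar in linarith)+
  then show ?thesis using kappa(1) by simp
qed

end
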